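(* If two simple directed graphs $G_1=(V,D_1)$ and $G_2=(V,D_2)$ have the same Jacobian matroid and at least one of them is not complete, then they have the same sink nodes (nodes with no children).
   Context: A directed graph $G=(V,D)$ has edge set $D\subseteq V\times V$ of ordered pairs $(i,j)$, $i\neq j$. It is simple if $(i,j)$ and $(j,i)$ are never both in $D$. It is complete if every pair of distinct nodes is adjacent. $\Lambda$ is the $V\times V$ matrix with indeterminate entries $\lambda_{ij}$ for $(i,j)\in D$ and zeros elsewhere, and $s$ is a further indeterminate. Let $\psi_G(\Lambda,s)=s(I-\Lambda)(I-\Lambda)^T=K$. The transposed Jacobian $J(\psi_G)$ has rows indexed by $\{\lambda_{kl}:(k,l)\in D\}\cup\{s\}$ and columns indexed by $K_{ij}$, $i\le j$, with entries $\partial K_{ij}/\partial\theta$. The Jacobian matroid of $G$ is the matroid on the column labels in which a set is independent iff its columns are linearly independent over $\mathbb{R}(\lambda,s)$. *)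

theory Defs
  imports Complex_Main "HOL-Library.Poly_Mapping" "HOL-Library.Option_ord" "HOL-Library.Product_Lexorder"
          "HOL-Computational_Algebra.Fraction_Field"
begin

type_synonym 'x mpoly = "('x \<Rightarrow>\<^sub>0 nat) \<Rightarrow>\<^sub>0 real"

definition mvar :: "'x \<Rightarrow> 'x mpoly" where
  "mvar x = Poly_Mapping.single (Poly_Mapping.single x 1) 1"

definition pdiff :: "'x \<Rightarrow> 'x mpoly \<Rightarrow> 'x mpoly" where
  "pdiff x p = (\<Sum>m\<in>Poly_Mapping.keys p.
      Poly_Mapping.single (m - Poly_Mapping.single x 1)
        (Poly_Mapping.lookup p m * real (Poly_Mapping.lookup m x)))"

section \<open>Directed graphs on the vertex type 'v (V = UNIV)\<close>

definition simple_digraph :: "('v \<times> 'v) set \<Rightarrow> bool" where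
  "simple_digraph D \<longleftrightarrow> (\<forall>(i,j)\<in>D. i \<noteq> j \<and> (j,i) \<notin> D)"

definition complete_digraph :: "('v \<times> 'v) set \<Rightarrow> bool" where
  "complete_digraph D \<longleftrightarrow> (\<forall>i j. i \<noteq> j \<longrightarrow> (i,j) \<in> D \<or> (j,i) \<in> D)"

definition sinks :: "('v \<times> 'v) set \<Rightarrow> 'v set" where
  "sinks D = {i. \<forall>j. (i,j) \<notin> D}"

text \<open>Indeterminates: Some (k,l) stands for lambda_kl, None stands for s.\<close>

definition lam :: "('v \<times> 'v) set \<Rightarrow> 'v \<Rightarrow> 'v \<Rightarrow> ('v \<times> 'v) option mpoly" where
  "lam D i j = (if (i,j) \<in> D then mvar (Some (i,j)) else 0)"

definition IminusLam :: "('v \<times> 'v) set \<Rightarrow> 'v \<Rightarrow> 'v \<Rightarrow> ('v \<times> 'v) option mpoly" where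
  "IminusLam D i k = (if i = k then 1 else 0) - lam D i k"

text \<open>Entry K_ij of K = s (I - Lambda)(I - Lambda)^T.\<close>
definition Kentry :: "('v::finite \<times> 'v) set \<Rightarrow> 'v \<Rightarrow> 'v \<Rightarrow> ('v \<times> 'v) option mpoly" where
  "Kentry D i j = mvar None * (\<Sum>k\<in>UNIV. IminusLam D i k * IminusLam D j k)"

text \<open>Row labels of the transposed Jacobian: lambda_kl for (k,l) in D, and s.\<close>
definition jac_rows :: "('v \<times> 'v) set \<Rightarrow> ('v \<times> 'v) option set" where
  "jac_rows D = insert None (Some ` D)"

text \<open>Column labels: K_ij with i <= j.\<close>
definition jac_cols :: "('v::linorder \<times> 'v) set" where
  "jac_cols = {(i,j). i \<le> j}"

definition jac_entry :: "('v::finite \<times> 'v) set \<Rightarrow> ('v \<times> 'v) option \<Rightarrow> 'v \<times> 'v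
    \<Rightarrow> ('v \<times> 'v) option mpoly" where
  "jac_entry D \<theta> ij = pdiff \<theta> (Kentry D (fst ij) (snd ij))"

definition jac_indep :: "('v::{finite,linorder} \<times> 'v) set \<Rightarrow> ('v \<times> 'v) set \<Rightarrow> bool" where
  "jac_indep D S \<longleftrightarrow> S \<subseteq> jac_cols \<and>
     (\<forall>c :: 'v \<times> 'v \<Rightarrow> ('v \<times> 'v) option mpoly fract.
        (\<forall>\<theta>\<in>jac_rows D. (\<Sum>p\<in>S. c p * Fract (jac_entry D \<theta> p) 1) = 0)
        \<longrightarrow> (\<forall>p\<in>S. c p = 0))"

definition same_jacobian_matroid :: "('v::{finite,linorder} \<times> 'v) set \<Rightarrow> ('v \<times> 'v) set \<Rightarrow> bool" where
  "same_jacobian_matroid D1 D2 \<longleftrightarrow> (\<forall>S. jac_indep D1 S \<longleftrightarrow> jac_indep D2 S)"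

end

(*
  The Jacobian has card D + 1 rows (one per edge parameter and one for s), so every
  independent set of columns has at most card D + 1 elements.  Independence over
  R(lambda, s) of a square set of columns follows from independence after specializing
  the parameters to real numbers, since the corresponding minor is then nonzero.

  At s = 1, Lambda = 0 the row of lambda_uw picks out the single column K_{uw}, which
  gives an independent set of size card D + 1.  Since a simple digraph has at most
  (|V| choose 2) edges, with equality exactly when it is complete, the rank of the
  matroid detects completeness.

  For a sink i of a non-complete G, specializing at s = 1, lambda_ab = [b = i] yields an
  independent set of size card D + 1 none of whose columns K_ab involves i: the edges
  (a, i) are traded for the diagonal columns K_aa.  If instead i has a child j, the row
  of lambda_ij vanishes on every column avoiding i but not on K_ii, so K_ii enlarges any
  independent set avoiding i.  Comparing both graphs therefore identifies their sinks.
*)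

theory Submission
  imports Defs "Jordan_Normal_Form.Determinant"
begin

section \<open>Formal partial derivatives\<close>

abbreviation var_exp :: "'x \<Rightarrow> 'x \<Rightarrow>\<^sub>0 nat" where
  "var_exp x \<equiv> Poly_Mapping.single x 1"

lemma lookup_pdiff:
  "Poly_Mapping.lookup (pdiff x p) m =
     Poly_Mapping.lookup p (m + var_exp x) * real (Poly_Mapping.lookup m x + 1)"
proof -
  have shift: "m' - var_exp x = m \<longleftrightarrow> m' = m + var_exp x" if "Poly_Mapping.lookup m' x \<noteq> 0" for m'
    using that by (auto simp: poly_mapping_eq_iff fun_eq_iff lookup_add lookup_minus lookup_single when_def)
  have "Poly_Mapping.lookup (pdiff x p) m =
     (\<Sum>m'\<in>Poly_Mapping.keys p.
        if m' = m + var_exp x then Poly_Mapping.lookup p m' * real (Poly_Mapping.lookup m' x) else 0)"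
    unfolding pdiff_def lookup_sum lookup_single
  proof (intro sum.cong refl)
    fix m'
    show "(Poly_Mapping.lookup p m' * real (Poly_Mapping.lookup m' x) when m' - var_exp x = m) =
      (if m' = m + var_exp x then Poly_Mapping.lookup p m' * real (Poly_Mapping.lookup m' x) else 0)"
    proof (cases "Poly_Mapping.lookup m' x = 0")
      case False
      then show ?thesis by (simp only: when_def shift[OF False])
    qed (auto simp: when_def lookup_add)
  qed
  then show ?thesis
    by (simp add: sum.delta lookup_add in_keys_iff)
qed

lemma pdiff_add: "pdiff x (p + q) = pdiff x p + pdiff x q"
  by (rule poly_mapping_eqI) (simp add: lookup_pdiff lookup_add algebra_simps)

lemma pdiff_diff: "pdiff x (p - q) = pdiff x p - pdiff x q"
  by (rule poly_mapping_eqI) (simp add: lookup_pdiff lookup_minus algebra_simps)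

lemma pdiff_zero [simp]: "pdiff x 0 = 0"
  by (simp add: pdiff_def)

lemma pdiff_one [simp]: "pdiff x 1 = 0"
proof (rule poly_mapping_eqI)
  fix m
  have "Poly_Mapping.lookup (m + var_exp x) x \<noteq> 0"
    by (simp add: lookup_add)
  then show "Poly_Mapping.lookup (pdiff x 1) m = Poly_Mapping.lookup 0 m"
    by (auto simp: lookup_pdiff lookup_one when_def)
qed

lemma pdiff_sum: "pdiff x (sum f A) = (\<Sum>a\<in>A. pdiff x (f a))"
  by (induction A rule: infinite_finite_induct) (auto simp: pdiff_add)

lemma lookup_mvar_mult:
  "Poly_Mapping.lookup (mvar y * p) m =
     (if Poly_Mapping.lookup m y = 0 then 0 else Poly_Mapping.lookup p (m - var_exp y))"
proof -
  have shift: "m = var_exp y + b \<longleftrightarrow> Poly_Mapping.lookup m y \<noteq> 0 \<and> b = m - var_exp y" for b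
    by (auto simp: poly_mapping_eq_iff fun_eq_iff lookup_add lookup_minus lookup_single when_def)
  have "Poly_Mapping.lookup (mvar y * p) m = (\<Sum>b. Poly_Mapping.lookup p b when m = var_exp y + b)"
    unfolding mvar_def lookup_mult lookup_single by (simp only: when_mult Sum_any_when_equal')
  also have "\<dots> = (\<Sum>b. Poly_Mapping.lookup p b when Poly_Mapping.lookup m y \<noteq> 0 \<and> b = m - var_exp y)"
    by (simp only: shift)
  finally show ?thesis by (simp add: when_def)
qed

lemma pdiff_mvar_mult:
  "pdiff x (mvar y * p) = (if x = y then p else 0) + mvar y * pdiff x p"
proof (rule poly_mapping_eqI)
  fix m
  have "m + var_exp x - var_exp y = m - var_exp y + var_exp x" if "x \<noteq> y"
    using that by (auto simp: poly_mapping_eq_iff fun_eq_iff lookup_add lookup_minus lookup_single when_def)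
  moreover have "m - var_exp y + var_exp y = m" if "Poly_Mapping.lookup m y \<noteq> 0"
    using that by (auto simp: poly_mapping_eq_iff fun_eq_iff lookup_add lookup_minus lookup_single when_def)
  ultimately show "Poly_Mapping.lookup (pdiff x (mvar y * p)) m =
      Poly_Mapping.lookup ((if x = y then p else 0) + mvar y * pdiff x p) m"
    by (cases "x = y")
      (auto simp: lookup_pdiff lookup_mvar_mult lookup_add lookup_minus lookup_single distrib_left)
qed

lemma mvar_neq_zero: "mvar x \<noteq> 0"
  by (metis lookup_single_eq lookup_zero mvar_def zero_neq_one)

section \<open>Evaluation of polynomials\<close>

definition eval_monom :: "('x \<Rightarrow> real) \<Rightarrow> ('x \<Rightarrow>\<^sub>0 nat) \<Rightarrow> real" where
  "eval_monom f m = (\<Prod>x\<in>Poly_Mapping.keys m. f x ^ Poly_Mapping.lookup m x)"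

definition eval_mpoly :: "('x \<Rightarrow> real) \<Rightarrow> 'x mpoly \<Rightarrow> real" where
  "eval_mpoly f p = (\<Sum>m\<in>Poly_Mapping.keys p. Poly_Mapping.lookup p m * eval_monom f m)"

lemma eval_monom_superset:
  assumes "finite K" "Poly_Mapping.keys m \<subseteq> K"
  shows "eval_monom f m = (\<Prod>x\<in>K. f x ^ Poly_Mapping.lookup m x)"
  unfolding eval_monom_def
  by (rule prod.mono_neutral_left[OF assms]) (auto simp: in_keys_iff)

lemma eval_monom_add: "eval_monom f (m + n) = eval_monom f m * eval_monom f n"
proof -
  let ?K = "Poly_Mapping.keys m \<union> Poly_Mapping.keys n"
  have "eval_monom f (m + n) = (\<Prod>x\<in>?K. f x ^ Poly_Mapping.lookup (m + n) x)"
    using keys_add[of m n] by (intro eval_monom_superset) auto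
  also have "\<dots> = (\<Prod>x\<in>?K. f x ^ Poly_Mapping.lookup m x) * (\<Prod>x\<in>?K. f x ^ Poly_Mapping.lookup n x)"
    by (simp add: lookup_add power_add prod.distrib)
  also have "\<dots> = eval_monom f m * eval_monom f n"
    by (subst (1 2) eval_monom_superset[of ?K]) auto
  finally show ?thesis .
qed

lemma eval_mpoly_superset:
  assumes "finite K" "Poly_Mapping.keys p \<subseteq> K"
  shows "eval_mpoly f p = (\<Sum>m\<in>K. Poly_Mapping.lookup p m * eval_monom f m)"
  unfolding eval_mpoly_def
  by (rule sum.mono_neutral_left[OF assms]) (auto simp: in_keys_iff)

lemma eval_mpoly_add: "eval_mpoly f (p + q) = eval_mpoly f p + eval_mpoly f q"
proof -
  let ?K = "Poly_Mapping.keys p \<union> Poly_Mapping.keys q"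
  have "eval_mpoly f (p + q) = (\<Sum>m\<in>?K. Poly_Mapping.lookup (p + q) m * eval_monom f m)"
    using keys_add[of p q] by (intro eval_mpoly_superset) auto
  also have "\<dots> = (\<Sum>m\<in>?K. Poly_Mapping.lookup p m * eval_monom f m)
      + (\<Sum>m\<in>?K. Poly_Mapping.lookup q m * eval_monom f m)"
    by (simp add: lookup_add distrib_right sum.distrib)
  also have "\<dots> = eval_mpoly f p + eval_mpoly f q"
    by (subst (1 2) eval_mpoly_superset[of ?K]) auto
  finally show ?thesis .
qed

lemma eval_mpoly_zero [simp]: "eval_mpoly f 0 = 0"
  by (simp add: eval_mpoly_def)

lemma eval_mpoly_single [simp]: "eval_mpoly f (Poly_Mapping.single m c) = c * eval_monom f m"
  by (simp add: eval_mpoly_def)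

lemma eval_mpoly_sum: "eval_mpoly f (sum g A) = (\<Sum>a\<in>A. eval_mpoly f (g a))"
  by (induction A rule: infinite_finite_induct) (simp_all add: eval_mpoly_add)

lemma eval_mpoly_mult: "eval_mpoly f (p * q) = eval_mpoly f p * eval_mpoly f q"
proof -
  let ?L = "Poly_Mapping.lookup"
  have expand: "r = (\<Sum>m\<in>Poly_Mapping.keys r. Poly_Mapping.single m (?L r m))" for r :: "'x mpoly"
    by (rule poly_mapping_eqI) (simp add: lookup_sum lookup_single when_def sum.delta in_keys_iff)
  have "p * q = (\<Sum>m\<in>Poly_Mapping.keys p. \<Sum>n\<in>Poly_Mapping.keys q. Poly_Mapping.single (m + n) (?L p m * ?L q n))"
    by (subst expand, subst (2) expand) (simp add: sum_product mult_single)
  then have "eval_mpoly f (p * q) = (\<Sum>m\<in>Poly_Mapping.keys p. \<Sum>n\<in>Poly_Mapping.keys q.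
      (?L p m * eval_monom f m) * (?L q n * eval_monom f n))"
    by (simp add: eval_mpoly_sum eval_monom_add mult_ac)
  then show ?thesis
    by (simp add: eval_mpoly_def sum_product)
qed

lemma eval_mpoly_one: "eval_mpoly f 1 = 1"
  by (metis eval_mpoly_single eval_monom_def keys_zero mult_1 prod.empty single_one)

interpretation eval_mpoly: comm_ring_hom "eval_mpoly f" for f
  by unfold_locales (simp_all add: eval_mpoly_add eval_mpoly_mult eval_mpoly_one)

lemma eval_mpoly_mvar [simp]: "eval_mpoly f (mvar x) = f x"
  by (simp add: mvar_def eval_monom_def)

section \<open>Linear independence of columns\<close>

definition lin_indep_cols :: "'r set \<Rightarrow> 'c set \<Rightarrow> ('r \<Rightarrow> 'c \<Rightarrow> 'k::field) \<Rightarrow> bool" where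
  "lin_indep_cols R S v \<longleftrightarrow>
     (\<forall>c. (\<forall>\<theta>\<in>R. (\<Sum>p\<in>S. c p * v \<theta> p) = 0) \<longrightarrow> (\<forall>p\<in>S. c p = 0))"

lemma lin_indep_cols_iff_kernel:
  fixes v :: "'r \<Rightarrow> 'c \<Rightarrow> 'k::field"
  assumes r: "bij_betw r {0..<m} R" and q: "bij_betw q {0..<n} S"
  shows "lin_indep_cols R S v \<longleftrightarrow>
    (\<forall>x\<in>carrier_vec n. mat m n (\<lambda>(i, j). v (r i) (q j)) *\<^sub>v x = 0\<^sub>v m \<longrightarrow> x = 0\<^sub>v n)"
    (is "_ \<longleftrightarrow> (\<forall>x\<in>_. ?A *\<^sub>v x = _ \<longrightarrow> _)")
proof -
  have row: "(?A *\<^sub>v vec n (\<lambda>j. c (q j))) $ i = (\<Sum>p\<in>S. c p * v (r i) p)" if "i < m" for c i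
    using that sum.reindex_bij_betw[OF q, of "\<lambda>p. c p * v (r i) p"]
    by (simp add: scalar_prod_def mult.commute)
  have rows: "R = r ` {0..<m}"
    using r by (simp add: bij_betw_def)
  show ?thesis
  proof
    assume ind: "lin_indep_cols R S v"
    show "\<forall>x\<in>carrier_vec n. ?A *\<^sub>v x = 0\<^sub>v m \<longrightarrow> x = 0\<^sub>v n"
    proof (intro ballI impI)
      fix x :: "'k vec"
      assume x: "x \<in> carrier_vec n" "?A *\<^sub>v x = 0\<^sub>v m"
      define c where "c p = x $ inv_into {0..<n} q p" for p
      have x_eq: "x = vec n (\<lambda>j. c (q j))"
        by (rule eq_vecI) (use x(1) q in \<open>auto simp: c_def bij_betw_def inv_into_f_f\<close>)
      have "(\<Sum>p\<in>S. c p * v (r i) p) = 0" if "i < m" for i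
        using row[OF that, of c] x(2) that by (simp flip: x_eq)
      then have "\<forall>\<theta>\<in>R. (\<Sum>p\<in>S. c p * v \<theta> p) = 0"
        unfolding rows by auto
      then have "\<forall>p\<in>S. c p = 0"
        using ind by (simp add: lin_indep_cols_def)
      then show "x = 0\<^sub>v n"
        using q x_eq by (auto simp: bij_betw_def)
    qed
  next
    assume ker: "\<forall>x\<in>carrier_vec n. ?A *\<^sub>v x = 0\<^sub>v m \<longrightarrow> x = 0\<^sub>v n"
    show "lin_indep_cols R S v"
      unfolding lin_indep_cols_def
    proof (intro allI impI)
      fix c
      assume rel: "\<forall>\<theta>\<in>R. (\<Sum>p\<in>S. c p * v \<theta> p) = 0"
      have "?A *\<^sub>v vec n (\<lambda>j. c (q j)) = 0\<^sub>v m"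
        using row rel unfolding rows by (intro eq_vecI) auto
      then have "vec n (\<lambda>j. c (q j)) = 0\<^sub>v n"
        using ker by simp
      then have "c (q j) = 0" if "j < n" for j
        using that by (metis index_vec index_zero_vec(1))
      then show "\<forall>p\<in>S. c p = 0"
        using q by (auto simp: bij_betw_def)
    qed
  qed
qed

lemma lin_indep_cols_iff_det:
  fixes v :: "'r \<Rightarrow> 'c \<Rightarrow> 'k::field"
  assumes "bij_betw r {0..<n} R" and "bij_betw q {0..<n} S"
  shows "lin_indep_cols R S v \<longleftrightarrow> det (mat n n (\<lambda>(i, j). v (r i) (q j))) \<noteq> 0"
  by (subst det_0_iff_vec_prod_zero_field[of _ n])
    (auto simp: lin_indep_cols_iff_kernel[OF assms])

lemma not_lin_indep_cols_if_card_less: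
  fixes v :: "'r \<Rightarrow> 'c \<Rightarrow> 'k::field"
  assumes "finite R" "finite S" "card R < card S"
  shows "\<not> lin_indep_cols R S v"
proof -
  define m where "m = card R"
  define n where "n = card S"
  obtain r where r: "bij_betw r {0..<m} R"
    using ex_bij_betw_nat_finite[OF assms(1)] m_def by blast
  obtain q where q: "bij_betw q {0..<n} S"
    using ex_bij_betw_nat_finite[OF assms(2)] n_def by blast
  have mn: "m < n"
    using assms(3) m_def n_def by simp
  \<comment> \<open>pad the matrix with zero rows to a singular square one\<close>
  define row where "row i = (if i < m then vec n (\<lambda>j. v (r i) (q j)) else 0\<^sub>v n)" for i
  define B where "B = mat\<^sub>r n n row"
  have "B = mat\<^sub>r n n (\<lambda>i. if i = n - 1 then 0\<^sub>v n else row i)"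
    unfolding B_def by (rule eq_matI) (use mn in \<open>auto simp: row_def\<close>)
  then have "det B = 0"
    using det_row_0[of "n - 1" n row] mn by (auto simp: row_def)
  then obtain x where x: "x \<in> carrier_vec n" "x \<noteq> 0\<^sub>v n" "B *\<^sub>v x = 0\<^sub>v n"
    using det_0_iff_vec_prod_zero_field[of B n] by (auto simp: B_def)
  have "mat m n (\<lambda>(i, j). v (r i) (q j)) *\<^sub>v x = 0\<^sub>v m"
  proof (rule eq_vecI)
    fix i assume "i < dim_vec (0\<^sub>v m :: 'k vec)"
    then have "i < m" by simp
    then have "(mat m n (\<lambda>(i, j). v (r i) (q j)) *\<^sub>v x) $ i = (B *\<^sub>v x) $ i"
      using mn x(1) by (simp add: B_def row_def scalar_prod_def)
    then show "(mat m n (\<lambda>(i, j). v (r i) (q j)) *\<^sub>v x) $ i = 0\<^sub>v m $ i"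
      using x(3) \<open>i < m\<close> mn by simp
  qed simp
  then show ?thesis
    using x lin_indep_cols_iff_kernel[OF r q] by blast
qed

lemma lin_indep_cols_to_fract_if_hom:
  fixes w :: "'r \<Rightarrow> 'c \<Rightarrow> 'a::idom" and h :: "'a \<Rightarrow> 'k::field"
  assumes "comm_ring_hom h" and "finite R" "finite S" "card R = card S"
    and "lin_indep_cols R S (\<lambda>\<theta> p. h (w \<theta> p))"
  shows "lin_indep_cols R S (\<lambda>\<theta> p. to_fract (w \<theta> p))"
proof -
  interpret h: comm_ring_hom h by fact
  interpret to_fract: inj_comm_ring_hom "to_fract :: 'a \<Rightarrow> 'a fract"
    by unfold_locales auto
  define n where "n = card S"
  obtain r where r: "bij_betw r {0..<n} R"
    using ex_bij_betw_nat_finite[OF assms(2)] n_def assms(4) by metis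
  obtain q where q: "bij_betw q {0..<n} S"
    using ex_bij_betw_nat_finite[OF assms(3)] n_def by blast
  define A where "A = mat n n (\<lambda>(i, j). w (r i) (q j))"
  have map_A: "map_mat g A = mat n n (\<lambda>(i, j). g (w (r i) (q j)))" for g :: "'a \<Rightarrow> 'b"
    by (rule eq_matI) (auto simp: A_def)
  have "h (det A) \<noteq> 0"
    using assms(5) lin_indep_cols_iff_det[OF r q, of "\<lambda>\<theta> p. h (w \<theta> p)"] map_A[of h] h.hom_det[of A]
    by simp
  then have "to_fract (det A) \<noteq> 0"
    by auto
  then show ?thesis
    using lin_indep_cols_iff_det[OF r q, of "\<lambda>\<theta> p. to_fract (w \<theta> p)"] map_A[of to_fract]
      to_fract.hom_det[of A]
    by simp
qed

lemma lin_indep_cols_insert: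
  assumes "lin_indep_cols R S v" "finite S" "\<theta>\<^sub>0 \<in> R"
    and "\<forall>p\<in>S. v \<theta>\<^sub>0 p = 0" "v \<theta>\<^sub>0 p\<^sub>0 \<noteq> 0"
  shows "lin_indep_cols R (insert p\<^sub>0 S) v"
  unfolding lin_indep_cols_def
proof (intro allI impI)
  fix c
  assume rel: "\<forall>\<theta>\<in>R. (\<Sum>p\<in>insert p\<^sub>0 S. c p * v \<theta> p) = 0"
  have "p\<^sub>0 \<notin> S"
    using assms(4,5) by auto
  then have split: "(\<Sum>p\<in>insert p\<^sub>0 S. c p * v \<theta> p) = c p\<^sub>0 * v \<theta> p\<^sub>0 + (\<Sum>p\<in>S. c p * v \<theta> p)" for \<theta>
    using assms(2) by simp
  have "c p\<^sub>0 = 0"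
    using rel split[of \<theta>\<^sub>0] assms(3-5) by simp
  then have "\<forall>\<theta>\<in>R. (\<Sum>p\<in>S. c p * v \<theta> p) = 0"
    using rel split by simp
  then show "\<forall>p\<in>insert p\<^sub>0 S. c p = 0"
    using assms(1) \<open>c p\<^sub>0 = 0\<close> by (simp add: lin_indep_cols_def)
qed

definition gram_entry :: "('v::finite \<times> 'v) set \<Rightarrow> 'v \<Rightarrow> 'v \<Rightarrow> ('v \<times> 'v) option mpoly" where
  "gram_entry D a b = (\<Sum>k\<in>UNIV. IminusLam D a k * IminusLam D b k)"

lemma pdiff_IminusLam_mult:
  "pdiff \<theta> (IminusLam D a k * q) =
     IminusLam D a k * pdiff \<theta> q - (if \<theta> = Some (a, k) \<and> (a, k) \<in> D then q else 0)"
proof -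
  have "pdiff \<theta> (lam D a k * q) =
      (if \<theta> = Some (a, k) \<and> (a, k) \<in> D then q else 0) + lam D a k * pdiff \<theta> q"
    by (auto simp: lam_def pdiff_mvar_mult)
  then show ?thesis
    by (simp add: IminusLam_def left_diff_distrib pdiff_diff)
qed

lemma pdiff_IminusLam:
  "pdiff \<theta> (IminusLam D a k) = - (if \<theta> = Some (a, k) \<and> (a, k) \<in> D then 1 else 0)"
  using pdiff_IminusLam_mult[of \<theta> D a k 1] by simp

lemma pdiff_None_gram_entry: "pdiff None (gram_entry D a b) = 0"
  by (simp add: gram_entry_def pdiff_sum pdiff_IminusLam_mult pdiff_IminusLam)

lemma pdiff_Some_gram_entry:
  assumes "(u, w) \<in> D"
  shows "pdiff (Some (u, w)) (gram_entry D a b) =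
    - ((if a = u then IminusLam D b w else 0) + (if b = u then IminusLam D a w else 0))"
proof -
  have "pdiff (Some (u, w)) (gram_entry D a b) = (\<Sum>k\<in>UNIV.
      if k = w then - ((if a = u then IminusLam D b k else 0) + (if b = u then IminusLam D a k else 0))
      else 0)"
    unfolding gram_entry_def pdiff_sum
    by (intro sum.cong refl) (use assms in \<open>auto simp: pdiff_IminusLam_mult pdiff_IminusLam\<close>)
  then show ?thesis
    by simp
qed

lemma jac_entry_None: "jac_entry D None (a, b) = gram_entry D a b"
  by (simp add: jac_entry_def Kentry_def pdiff_mvar_mult pdiff_None_gram_entry flip: gram_entry_def)

lemma jac_entry_Some:
  assumes "(u, w) \<in> D"
  shows "jac_entry D (Some (u, w)) (a, b) =
    - mvar None * ((if a = u then IminusLam D b w else 0) + (if b = u then IminusLam D a w else 0))"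
  using assms
  by (simp add: jac_entry_def Kentry_def pdiff_mvar_mult pdiff_Some_gram_entry flip: gram_entry_def)

lemma card_jac_rows: "card (jac_rows D) = card D + 1"
  for D :: "('v::finite \<times> 'v) set"
  by (simp add: jac_rows_def card_image image_iff)

lemma jac_indep_iff_lin_indep_cols:
  "jac_indep D S \<longleftrightarrow>
     S \<subseteq> jac_cols \<and> lin_indep_cols (jac_rows D) S (\<lambda>\<theta> p. to_fract (jac_entry D \<theta> p))"
  by (simp add: jac_indep_def lin_indep_cols_def to_fract_def)

lemma card_le_if_jac_indep:
  assumes "jac_indep D S"
  shows "card S \<le> card D + 1"
  using assms not_lin_indep_cols_if_card_less[of "jac_rows D" S]
  by (force simp: jac_indep_iff_lin_indep_cols card_jac_rows not_le)

lemma jac_indep_if_eval_lin_indep_cols: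
  assumes "S \<subseteq> jac_cols" "card S = card D + 1"
    and "lin_indep_cols (jac_rows D) S (\<lambda>\<theta> p. eval_mpoly f (jac_entry D \<theta> p))"
  shows "jac_indep D S"
proof -
  have "finite S"
    using assms(2) card_ge_0_finite by fastforce
  then show ?thesis
    using assms lin_indep_cols_to_fract_if_hom[OF eval_mpoly.comm_ring_hom_axioms, of "jac_rows D" S]
    by (simp add: jac_indep_iff_lin_indep_cols card_jac_rows)
qed

lemma jac_indep_insert_diag:
  assumes "jac_indep D S" "(i, j) \<in> D" "i \<noteq> j" "\<forall>p\<in>S. fst p \<noteq> i \<and> snd p \<noteq> i"
  shows "jac_indep D (insert (i, i) S)"
proof -
  have "jac_entry D (Some (i, j)) p = 0" if "p \<in> S" for p
    using that assms(2,4) by (cases p) (fastforce simp: jac_entry_Some)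
  moreover have "jac_entry D (Some (i, j)) (i, i) = 2 * (mvar None * mvar (Some (i, j)))"
    using assms(2,3) by (simp add: jac_entry_Some IminusLam_def lam_def algebra_simps)
  then have "jac_entry D (Some (i, j)) (i, i) \<noteq> 0"
    by (simp add: mvar_neq_zero)
  moreover have "finite S" "Some (i, j) \<in> jac_rows D"
    using assms(2) by (simp_all add: jac_rows_def)
  ultimately show ?thesis
    using assms(1)
      lin_indep_cols_insert[of "jac_rows D" S "\<lambda>\<theta> p. to_fract (jac_entry D \<theta> p)" "Some (i, j)" "(i, i)"]
    by (auto simp: jac_indep_iff_lin_indep_cols jac_cols_def)
qed

definition into_point :: "'v set \<Rightarrow> ('v \<times> 'v) option \<Rightarrow> real" where
  "into_point T \<theta> = (case \<theta> of None \<Rightarrow> 1 | Some (a, b) \<Rightarrow> if b \<in> T then 1 else 0)"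

lemma eval_IminusLam:
  "eval_mpoly (into_point T) (IminusLam D x k) =
     (if x = k then 1 else 0) - (if (x, k) \<in> D \<and> k \<in> T then 1 else 0)"
  by (simp add: IminusLam_def lam_def into_point_def eval_mpoly.hom_minus)

lemma eval_jac_entry_None:
  fixes D :: "('v::finite \<times> 'v) set"
  assumes "x \<notin> T" "y \<notin> T"
  shows "eval_mpoly (into_point T) (jac_entry D None (x, y)) =
    (if x = y then 1 else 0) + (\<Sum>k\<in>T. if (x, k) \<in> D \<and> (y, k) \<in> D then 1 else 0)"
proof -
  have "eval_mpoly (into_point T) (jac_entry D None (x, y)) = (\<Sum>k\<in>UNIV.
      (if k = x then (if x = y then 1 else 0) else 0) +
      (if k \<in> T then (if (x, k) \<in> D \<and> (y, k) \<in> D then 1 else 0) else 0))"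
    unfolding jac_entry_None gram_entry_def eval_mpoly.hom_sum eval_mpoly.hom_mult eval_IminusLam
    by (intro sum.cong refl) (use assms in auto)
  then show ?thesis
    by (simp add: sum.distrib sum.inter_restrict[of UNIV, symmetric])
qed

text \<open>The column label K_ab, a \<le> b, attached to the undirected edge {a, b}.\<close>

definition edge_col :: "'v::linorder \<Rightarrow> 'v \<Rightarrow> 'v \<times> 'v" where
  "edge_col a b = (min a b, max a b)"

lemma edge_col_in_jac_cols: "edge_col a b \<in> jac_cols"
  by (auto simp: edge_col_def jac_cols_def min_def max_def)

lemma edge_col_eq_iff: "edge_col a b = edge_col a' b' \<longleftrightarrow> (a = a' \<and> b = b') \<or> (a = b' \<and> b = a')"
  by (auto simp: edge_col_def min_def max_def)

lemma edge_col_eq_pair_iff: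
  "x \<le> y \<Longrightarrow> (x, y) = edge_col a b \<longleftrightarrow> (x = a \<and> y = b) \<or> (x = b \<and> y = a)"
  by (auto simp: edge_col_def min_def max_def)

lemma eval_jac_entry_edge_col:
  assumes "(u, w) \<in> D" "u \<noteq> w" "w \<notin> T" "x \<le> y"
  shows "eval_mpoly (into_point T) (jac_entry D (Some (u, w)) (x, y)) =
    - (if (x, y) = edge_col u w then 1 else 0)"
  using assms
  by (auto simp: jac_entry_Some eval_IminusLam edge_col_eq_pair_iff hom_distribs into_point_def)

lemma eval_jac_entry_into:
  assumes "(u, w) \<in> D" "w \<in> T" "x \<notin> T" "y \<notin> T"
  shows "eval_mpoly (into_point T) (jac_entry D (Some (u, w)) (x, y)) =
    (if x = u \<and> (y, w) \<in> D then 1 else 0) + (if y = u \<and> (x, w) \<in> D then 1 else 0)"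
  using assms by (auto simp: jac_entry_Some eval_IminusLam hom_distribs into_point_def)

lemma edge_col_coeff_eq_zero:
  assumes "(u, w) \<in> D" "u \<noteq> w" "w \<notin> T" "S \<subseteq> jac_cols" "edge_col u w \<in> S"
    and "(\<Sum>p\<in>S. c p * eval_mpoly (into_point T) (jac_entry D (Some (u, w)) p)) = 0"
  shows "c (edge_col u w) = 0"
proof -
  have "(\<Sum>p\<in>S. c p * eval_mpoly (into_point T) (jac_entry D (Some (u, w)) p)) =
      (\<Sum>p\<in>S. if p = edge_col u w then - c p else 0)"
  proof (intro sum.cong refl)
    fix p assume "p \<in> S"
    with assms(4) obtain x y where "p = (x, y)" "x \<le> y"
      by (auto simp: jac_cols_def)
    then show "c p * eval_mpoly (into_point T) (jac_entry D (Some (u, w)) p) =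
        (if p = edge_col u w then - c p else 0)"
      using eval_jac_entry_edge_col[OF assms(1-3)] by simp
  qed
  then show ?thesis
    using assms(5,6) by simp
qed

lemma edge_col_less: "a \<noteq> b \<Longrightarrow> fst (edge_col a b) < snd (edge_col a b)"
  by (auto simp: edge_col_def min_def max_def not_le less_le)

lemma simple_digraph_irrefl: "simple_digraph D \<Longrightarrow> (a, b) \<in> D \<Longrightarrow> a \<noteq> b"
  by (auto simp: simple_digraph_def)

definition edge_cols :: "('v::linorder \<times> 'v) set \<Rightarrow> ('v \<times> 'v) set" where
  "edge_cols E = (\<lambda>(a, b). edge_col a b) ` E"

lemma edge_cols_iff: "p \<in> edge_cols E \<longleftrightarrow> (\<exists>a b. (a, b) \<in> E \<and> p = edge_col a b)"
  by (auto simp: edge_cols_def)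

lemma edge_cols_avoid:
  assumes "\<forall>(a, b)\<in>E. a \<noteq> i \<and> b \<noteq> i" "p \<in> edge_cols E"
  shows "fst p \<noteq> i \<and> snd p \<noteq> i"
proof -
  obtain a b where "(a, b) \<in> E" "p = edge_col a b"
    using assms(2) unfolding edge_cols_iff by blast
  moreover have "a \<noteq> i" "b \<noteq> i"
    using assms(1) \<open>(a, b) \<in> E\<close> by auto
  ultimately show ?thesis
    by (simp add: edge_col_def min_def max_def)
qed

lemma card_edge_cols:
  assumes "simple_digraph D" "E \<subseteq> D"
  shows "card (edge_cols E) = card E"
proof -
  have "inj_on (\<lambda>(a, b). edge_col a b) D"
    using assms(1) by (auto simp: inj_on_def edge_col_eq_iff simple_digraph_def)
  then show ?thesis
    unfolding edge_cols_def using assms(2) by (simp add: card_image inj_on_subset)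
qed

lemma edge_cols_less:
  assumes "simple_digraph D" "p \<in> edge_cols D"
  shows "fst p < snd p"
  using assms edge_col_less by (auto simp: edge_cols_iff dest: simple_digraph_irrefl)

lemma edge_col_notin_edge_cols:
  assumes "(u, v) \<notin> D" "(v, u) \<notin> D"
  shows "edge_col u v \<notin> edge_cols D"
  using assms by (auto simp: edge_cols_iff edge_col_eq_iff)

lemma edge_cols_eq_if_complete:
  assumes "simple_digraph D" "complete_digraph D"
  shows "edge_cols D = {p. fst p < snd p}"
proof (intro equalityI subsetI)
  fix p :: "'a \<times> 'a" assume "p \<in> {p. fst p < snd p}"
  then obtain a b where "p = (a, b)" "a < b"
    by (cases p) auto
  then have "p = edge_col a b" "p = edge_col b a" "(a, b) \<in> D \<or> (b, a) \<in> D"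
    using assms(2) by (auto simp: edge_col_def complete_digraph_def)
  then show "p \<in> edge_cols D"
    unfolding edge_cols_iff by metis
qed (use edge_cols_less[OF assms(1)] in auto)

section \<open>Rank and completeness\<close>

lemma card_less_if_complete:
  fixes D\<^sub>1 D\<^sub>2 :: "('v::{finite,linorder} \<times> 'v) set"
  assumes "simple_digraph D\<^sub>1" "simple_digraph D\<^sub>2" "\<not> complete_digraph D\<^sub>1" "complete_digraph D\<^sub>2"
  shows "card D\<^sub>1 < card D\<^sub>2"
proof -
  obtain u v where "u \<noteq> v" "(u, v) \<notin> D\<^sub>1" "(v, u) \<notin> D\<^sub>1"
    using assms(3) by (auto simp: complete_digraph_def)
  then have "edge_col u v \<in> {p. fst p < snd p} - edge_cols D\<^sub>1"
    using edge_col_less[of u v] edge_col_notin_edge_cols[of u v D\<^sub>1] by auto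
  then have "edge_cols D\<^sub>1 \<subset> edge_cols D\<^sub>2"
    using edge_cols_less[OF assms(1)] edge_cols_eq_if_complete[OF assms(2,4)] by auto
  then have "card (edge_cols D\<^sub>1) < card (edge_cols D\<^sub>2)"
    by (simp add: psubset_card_mono)
  then show ?thesis
    using card_edge_cols[OF assms(1) order_refl] card_edge_cols[OF assms(2) order_refl] by simp
qed

lemma exists_jac_indep_card_eq:
  fixes D :: "('v::{finite,linorder} \<times> 'v) set"
  assumes "simple_digraph D"
  shows "\<exists>S. jac_indep D S \<and> card S = card D + 1"
proof -
  obtain a :: 'v where True by simp
  define S where "S = insert (a, a) (edge_cols D)"
  have "(a, a) \<notin> edge_cols D"
    using edge_cols_less[OF assms] by fastforce
  then have card: "card S = card D + 1"
    by (simp add: S_def card_edge_cols[OF assms])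
  have "(a, a) \<in> jac_cols"
    by (simp add: jac_cols_def)
  then have cols: "S \<subseteq> jac_cols"
    using edge_col_in_jac_cols by (auto simp: S_def edge_cols_iff)
  have "lin_indep_cols (jac_rows D) S (\<lambda>\<theta> p. eval_mpoly (into_point {}) (jac_entry D \<theta> p))"
    unfolding lin_indep_cols_def
  proof (intro allI impI)
    fix c
    assume rel: "\<forall>\<theta>\<in>jac_rows D. (\<Sum>p\<in>S. c p * eval_mpoly (into_point {}) (jac_entry D \<theta> p)) = 0"
    have edges: "c (edge_col u w) = 0" if "(u, w) \<in> D" for u w
      using that assms rel
      by (intro edge_col_coeff_eq_zero[OF that _ _ cols])
        (auto simp: S_def jac_rows_def simple_digraph_def edge_cols_iff)
    have "(\<Sum>p\<in>S. c p * eval_mpoly (into_point {}) (jac_entry D None p)) =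
        (\<Sum>p\<in>S. if p = (a, a) then c p else 0)"
      by (intro sum.cong refl) (auto simp: S_def eval_jac_entry_None edges edge_cols_iff)
    then have "c (a, a) = 0"
      using rel by (simp add: S_def jac_rows_def)
    then show "\<forall>p\<in>S. c p = 0"
      by (auto simp: S_def edges edge_cols_iff)
  qed
  then show ?thesis
    using jac_indep_if_eval_lin_indep_cols cols card by blast
qed

section \<open>Sinks\<close>

text \<open>For a sink i: the columns of the edges not into i, the diagonal columns K_aa of the
  parents a of i in place of the edges (a, i), and one extra column.\<close>

definition sink_cols :: "('v::linorder \<times> 'v) set \<Rightarrow> 'v \<Rightarrow> 'v \<times> 'v \<Rightarrow> ('v \<times> 'v) set" where
  "sink_cols D i x\<^sub>0 = insert x\<^sub>0 (edge_cols {e \<in> D. snd e \<noteq> i} \<union> (\<lambda>a. (a, a)) ` {a. (a, i) \<in> D})"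

context
  fixes D :: "('v::{finite,linorder} \<times> 'v) set" and i x y :: 'v
  assumes simple: "simple_digraph D" and sink: "i \<in> sinks D"
    \<comment> \<open>(x, y) is K_aa for a non-parent a of i, or K_uv for two non-adjacent parents u, v\<close>
    and extra_col: "x \<le> y" "x \<noteq> i" "y \<noteq> i" "(x, y) \<notin> D" "(y, x) \<notin> D"
      "x = y \<longleftrightarrow> \<not> ((x, i) \<in> D \<and> (y, i) \<in> D)"
begin

lemma parent_of_sink_neq: "(a, i) \<in> D \<Longrightarrow> a \<noteq> i"
  using sink by (auto simp: sinks_def)

lemma sink_cols_disjoint:
  "(x, y) \<notin> edge_cols {e \<in> D. snd e \<noteq> i}"
  "(x, y) \<notin> (\<lambda>a. (a, a)) ` {a. (a, i) \<in> D}"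
  "edge_cols {e \<in> D. snd e \<noteq> i} \<inter> (\<lambda>a. (a, a)) ` {a. (a, i) \<in> D} = {}"
proof -
  have sub: "edge_cols {e \<in> D. snd e \<noteq> i} \<subseteq> edge_cols D"
    by (auto simp: edge_cols_def)
  moreover have "(x, y) = edge_col x y"
    using extra_col(1) by (simp add: edge_col_eq_pair_iff)
  ultimately show "(x, y) \<notin> edge_cols {e \<in> D. snd e \<noteq> i}"
    using edge_col_notin_edge_cols[OF extra_col(4,5)] by auto
  show "(x, y) \<notin> (\<lambda>a. (a, a)) ` {a. (a, i) \<in> D}"
    using extra_col(6) by auto
  have "(a, a) \<notin> edge_cols {e \<in> D. snd e \<noteq> i}" for a
    using edge_cols_less[OF simple, of "(a, a)"] \<open>edge_cols {e \<in> D. snd e \<noteq> i} \<subseteq> edge_cols D\<close>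
    by auto
  then show "edge_cols {e \<in> D. snd e \<noteq> i} \<inter> (\<lambda>a. (a, a)) ` {a. (a, i) \<in> D} = {}"
    by auto
qed

lemma card_sink_cols: "card (sink_cols D i (x, y)) = card D + 1"
proof -
  let ?E = "{e \<in> D. snd e \<noteq> i}" and ?P = "{a. (a, i) \<in> D}"
  have "card (?E \<union> (\<lambda>a. (a, i)) ` ?P) = card ?E + card ((\<lambda>a. (a, i)) ` ?P)"
    by (rule card_Un_disjoint) auto
  moreover have "?E \<union> (\<lambda>a. (a, i)) ` ?P = D"
    by auto
  moreover have "card ((\<lambda>a. (a, i)) ` ?P) = card ?P"
    by (simp add: card_image inj_on_def)
  ultimately have "card D = card ?E + card ?P"
    by simp
  moreover have "card (edge_cols ?E) = card ?E"
    using card_edge_cols[OF simple] by simp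
  moreover have "card ((\<lambda>a. (a, a)) ` ?P) = card ?P"
    by (simp add: card_image inj_on_def)
  ultimately show ?thesis
    using sink_cols_disjoint by (simp add: sink_cols_def card_Un_disjoint)
qed

lemma sink_cols_subset: "sink_cols D i (x, y) \<subseteq> jac_cols"
proof -
  have "(x, y) \<in> jac_cols" "(a, a) \<in> jac_cols" for a
    using extra_col(1) by (simp_all add: jac_cols_def)
  then show ?thesis
    using edge_col_in_jac_cols by (auto simp: sink_cols_def edge_cols_iff)
qed

lemma sink_cols_avoid:
  assumes "p \<in> sink_cols D i (x, y)"
  shows "fst p \<noteq> i \<and> snd p \<noteq> i"
proof -
  have "\<forall>(a, b)\<in>{e \<in> D. snd e \<noteq> i}. a \<noteq> i \<and> b \<noteq> i"
    using sink by (auto simp: sinks_def)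
  then have edge: "fst p \<noteq> i \<and> snd p \<noteq> i" if "p \<in> edge_cols {e \<in> D. snd e \<noteq> i}"
    using edge_cols_avoid that by blast
  have diag: "fst p \<noteq> i \<and> snd p \<noteq> i" if "p \<in> (\<lambda>a. (a, a)) ` {a. (a, i) \<in> D}"
  proof -
    from that obtain a where "(a, i) \<in> D" "p = (a, a)"
      by blast
    then show ?thesis
      using parent_of_sink_neq by simp
  qed
  from assms have "p = (x, y) \<or> p \<in> edge_cols {e \<in> D. snd e \<noteq> i} \<or> p \<in> (\<lambda>a. (a, a)) ` {a. (a, i) \<in> D}"
    by (simp only: sink_cols_def insert_iff Un_iff)
  then show ?thesis
    using edge diag extra_col(2,3) by (elim disjE) simp_all
qed

lemma eval_jac_entry_parent_diag:
  assumes "(a, i) \<in> D" "(b, i) \<in> D"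
  shows "eval_mpoly (into_point {i}) (jac_entry D None (b, b)) = 2"
    and "eval_mpoly (into_point {i}) (jac_entry D (Some (a, i)) (b, b)) = (if b = a then 2 else 0)"
  using assms parent_of_sink_neq[OF assms(2)] by (simp_all add: eval_jac_entry_None eval_jac_entry_into)

lemma eval_jac_entry_extra_col:
  "eval_mpoly (into_point {i}) (jac_entry D None (x, y))
     - (\<Sum>a\<in>{a. (a, i) \<in> D}. eval_mpoly (into_point {i}) (jac_entry D (Some (a, i)) (x, y)))
   = (if x = y then 1 else -1)"
proof -
  have "(\<Sum>a\<in>{a. (a, i) \<in> D}. eval_mpoly (into_point {i}) (jac_entry D (Some (a, i)) (x, y))) =
      (\<Sum>a\<in>{a. (a, i) \<in> D}. (if a = x then (if (y, i) \<in> D then 1 else 0) else 0)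
                              + (if a = y then (if (x, i) \<in> D then 1 else 0) else 0))"
    using extra_col(2,3) by (intro sum.cong refl) (simp add: eval_jac_entry_into)
  also have "\<dots> = 2 * (if (x, i) \<in> D \<and> (y, i) \<in> D then 1 else 0)"
    by (simp add: sum.distrib)
  finally show ?thesis
    using extra_col(2,3,6) by (simp add: eval_jac_entry_None)
qed

lemma lin_indep_cols_sink_cols:
  "lin_indep_cols (jac_rows D) (sink_cols D i (x, y))
     (\<lambda>\<theta> p. eval_mpoly (into_point {i}) (jac_entry D \<theta> p))"
  unfolding lin_indep_cols_def
proof (intro allI impI)
  let ?S = "sink_cols D i (x, y)" and ?E = "{e \<in> D. snd e \<noteq> i}" and ?P = "{a. (a, i) \<in> D}"
  let ?g = "\<lambda>\<theta> p. eval_mpoly (into_point {i}) (jac_entry D \<theta> p)"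
  fix c
  assume rel: "\<forall>\<theta>\<in>jac_rows D. (\<Sum>p\<in>?S. c p * ?g \<theta> p) = 0"
  have edges: "c p = 0" if p: "p \<in> edge_cols ?E" for p
  proof -
    obtain a b where "(a, b) \<in> ?E" "p = edge_col a b"
      using p unfolding edge_cols_iff by blast
    then have ab: "(a, b) \<in> D" "b \<noteq> i" "p = edge_col a b"
      by simp_all
    have "p \<in> ?S" "Some (a, b) \<in> jac_rows D"
      using p ab(1) by (simp_all add: sink_cols_def jac_rows_def)
    then show ?thesis
      using edge_col_coeff_eq_zero[of a b D "{i}" ?S c] ab rel sink_cols_subset
        simple_digraph_irrefl[OF simple]
      by simp
  qed
  have split: "(\<Sum>p\<in>?S. c p * h p) = c (x, y) * h (x, y) + (\<Sum>a\<in>?P. c (a, a) * h (a, a))" for h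
  proof -
    have "(\<Sum>p\<in>?S. c p * h p) = c (x, y) * h (x, y)
        + ((\<Sum>p\<in>edge_cols ?E. c p * h p) + (\<Sum>p\<in>(\<lambda>a. (a, a)) ` ?P. c p * h p))"
      using sink_cols_disjoint by (simp add: sink_cols_def sum.union_disjoint)
    also have "(\<Sum>p\<in>edge_cols ?E. c p * h p) = 0"
      using edges by simp
    also have "(\<Sum>p\<in>(\<lambda>a. (a, a)) ` ?P. c p * h p) = (\<Sum>a\<in>?P. c (a, a) * h (a, a))"
      by (simp add: sum.reindex inj_on_def)
    finally show ?thesis
      by simp
  qed
  have row_Some: "c (x, y) * ?g (Some (a, i)) (x, y) + 2 * c (a, a) = 0" if "a \<in> ?P" for a
  proof -
    have "(\<Sum>b\<in>?P. c (b, b) * ?g (Some (a, i)) (b, b)) = (\<Sum>b\<in>?P. if b = a then 2 * c (b, b) else 0)"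
      using that by (intro sum.cong refl) (simp add: eval_jac_entry_parent_diag)
    then show ?thesis
      using that rel split[of "?g (Some (a, i))"] by (simp add: jac_rows_def mult.commute)
  qed
  have row_None: "c (x, y) * ?g None (x, y) + 2 * (\<Sum>a\<in>?P. c (a, a)) = 0"
    using rel split[of "?g None"]
    by (simp add: jac_rows_def eval_jac_entry_parent_diag sum_distrib_left mult.commute)
  \<comment> \<open>subtracting the rows of the lambda_ai from the row of s isolates c (x, y)\<close>
  have "(\<Sum>a\<in>?P. c (x, y) * ?g (Some (a, i)) (x, y) + 2 * c (a, a)) = 0"
    using row_Some by simp
  then have "c (x, y) * (?g None (x, y) - (\<Sum>a\<in>?P. ?g (Some (a, i)) (x, y))) = 0"
    using row_None by (simp add: sum.distrib sum_distrib_left right_diff_distrib)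
  then have xy: "c (x, y) = 0"
    using eval_jac_entry_extra_col by (simp split: if_splits)
  then have diag: "c p = 0" if "p \<in> (\<lambda>a. (a, a)) ` ?P" for p
    using that row_Some by auto
  have "p = (x, y) \<or> p \<in> edge_cols ?E \<or> p \<in> (\<lambda>a. (a, a)) ` ?P" if "p \<in> ?S" for p
    using that by (simp only: sink_cols_def insert_iff Un_iff)
  then show "\<forall>p\<in>?S. c p = 0"
    using xy edges diag by blast
qed

end

lemma exists_sink_extra_col:
  fixes D :: "('v::linorder \<times> 'v) set"
  assumes "simple_digraph D" "\<not> complete_digraph D" "i \<in> sinks D"
  obtains x y where "x \<le> y" "x \<noteq> i" "y \<noteq> i" "(x, y) \<notin> D" "(y, x) \<notin> D"
    "x = y \<longleftrightarrow> \<not> ((x, i) \<in> D \<and> (y, i) \<in> D)"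
proof (cases "\<exists>a. a \<noteq> i \<and> (a, i) \<notin> D")
  case True
  then obtain a where "a \<noteq> i" "(a, i) \<notin> D"
    by blast
  moreover have "(a, a) \<notin> D"
    using simple_digraph_irrefl[OF assms(1)] by blast
  ultimately show ?thesis
    using that[of a a] by simp
next
  case False
  then have parent: "a \<noteq> i \<Longrightarrow> (a, i) \<in> D" for a
    by blast
  obtain u v where uv: "u \<noteq> v" "(u, v) \<notin> D" "(v, u) \<notin> D"
    using assms(2) by (auto simp: complete_digraph_def)
  then have "u \<noteq> i" "v \<noteq> i"
    using parent by metis+
  then show ?thesis
    using that[of u v] that[of v u] uv parent by (cases "u \<le> v") auto
qed

lemma exists_jac_indep_avoiding_sink:
  fixes D :: "('v::{finite,linorder} \<times> 'v) set"
  assumes "simple_digraph D" "\<not> complete_digraph D" "i \<in> sinks D"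
  shows "\<exists>S. jac_indep D S \<and> card S = card D + 1 \<and> (\<forall>p\<in>S. fst p \<noteq> i \<and> snd p \<noteq> i)"
proof -
  obtain x y where xy: "x \<le> y" "x \<noteq> i" "y \<noteq> i" "(x, y) \<notin> D" "(y, x) \<notin> D"
    "x = y \<longleftrightarrow> \<not> ((x, i) \<in> D \<and> (y, i) \<in> D)"
    using exists_sink_extra_col[OF assms] .
  note sink_cols = sink_cols_subset[OF assms(1,3) xy] card_sink_cols[OF assms(1,3) xy]
    lin_indep_cols_sink_cols[OF assms(1,3) xy] sink_cols_avoid[OF assms(1,3) xy]
  show ?thesis
    using jac_indep_if_eval_lin_indep_cols[OF sink_cols(1-3)] sink_cols(2,4) by blast
qed

lemma complete_if_same_jacobian_matroid:
  assumes "same_jacobian_matroid D\<^sub>1 D\<^sub>2" "simple_digraph D\<^sub>1" "simple_digraph D\<^sub>2"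
    and "complete_digraph D\<^sub>2"
  shows "complete_digraph D\<^sub>1"
proof (rule ccontr)
  assume "\<not> complete_digraph D\<^sub>1"
  then have "card D\<^sub>1 < card D\<^sub>2"
    using card_less_if_complete assms(2-4) by blast
  moreover obtain S where "jac_indep D\<^sub>2 S" "card S = card D\<^sub>2 + 1"
    using exists_jac_indep_card_eq[OF assms(3)] by blast
  then have "card S \<le> card D\<^sub>1 + 1"
    using assms(1) card_le_if_jac_indep[of D\<^sub>1 S] by (simp add: same_jacobian_matroid_def)
  ultimately show False
    using \<open>card S = card D\<^sub>2 + 1\<close> by simp
qed

lemma sinks_subset_if_same_jacobian_matroid:
  assumes "same_jacobian_matroid D\<^sub>1 D\<^sub>2" "simple_digraph D\<^sub>1" "simple_digraph D\<^sub>2"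
    and "\<not> complete_digraph D\<^sub>1"
  shows "sinks D\<^sub>1 \<subseteq> sinks D\<^sub>2"
proof
  fix i assume "i \<in> sinks D\<^sub>1"
  then obtain S where S: "jac_indep D\<^sub>1 S" "card S = card D\<^sub>1 + 1" "\<forall>p\<in>S. fst p \<noteq> i \<and> snd p \<noteq> i"
    using exists_jac_indep_avoiding_sink assms(2,4) by blast
  show "i \<in> sinks D\<^sub>2"
  proof (rule ccontr)
    assume "i \<notin> sinks D\<^sub>2"
    then obtain j where "(i, j) \<in> D\<^sub>2"
      by (auto simp: sinks_def)
    moreover have "jac_indep D\<^sub>2 S"
      using S(1) assms(1) by (simp add: same_jacobian_matroid_def)
    ultimately have "jac_indep D\<^sub>2 (insert (i, i) S)"
      using jac_indep_insert_diag simple_digraph_irrefl[OF assms(3)] S(3) by blast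
    then have "card (insert (i, i) S) \<le> card D\<^sub>1 + 1"
      using assms(1) card_le_if_jac_indep by (auto simp: same_jacobian_matroid_def)
    moreover have "(i, i) \<notin> S" "finite S"
      using S(3) by auto
    ultimately show False
      using S(2) by simp
  qed
qed

theorem corollary4p6:
  fixes D1 D2 :: "('v::{finite,linorder} \<times> 'v) set"
  assumes "simple_digraph D1" and "simple_digraph D2"
    and "same_jacobian_matroid D1 D2"
    and "\<not> complete_digraph D1 \<or> \<not> complete_digraph D2"
  shows "sinks D1 = sinks D2"
proof -
  have same_sym: "same_jacobian_matroid D2 D1"
    using assms(3) by (simp add: same_jacobian_matroid_def)
  have "\<not> complete_digraph D1" "\<not> complete_digraph D2"
    using complete_if_same_jacobian_matroid[OF assms(3,1,2)]
      complete_if_same_jacobian_matroid[OF same_sym assms(2,1)] assms(4)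
    by blast+
  then show ?thesis
    using sinks_subset_if_same_jacobian_matroid[OF assms(3,1,2)]
      sinks_subset_if_same_jacobian_matroid[OF same_sym assms(2,1)]
    by blast
qed

end
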